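(* Let $P$ be the Borel probability measure on $\mathbb{R}$ with density $f(x)=(3/2)^n$ if $x\in J_n$ for some $n\in\mathbb{N}$, and $f(x)=0$ otherwise, where $J_n=[1-\frac{1}{3^{n-1}},\,1-\frac{2}{3^n}]$. Let $k,n\in\mathbb{N}$. Then the set $\{1-\frac{1}{3^{k-1}}+\frac{2i-1}{2n}\frac{1}{3^k}: 1\le i\le n\}$ is the unique optimal set of $n$-means for $P(\cdot|J_k)$. Moreover, if $\alpha_n(P(\cdot|J_k))$ denotes this set and $\alpha_1(P(\cdot|J_{(k,\infty)}))$ denotes an optimal set of one-mean for $P(\cdot|J_{(k,\infty)})$, then \[V(P,\alpha_n(P(\cdot|J_k)),J_k)=\frac{1}{n^2}\frac{1}{12}\frac{1}{18^k}\quad\text{and}\quad V(P,\alpha_1(P(\cdot|J_{(k,\infty)})),J_{(k,\infty)})=\frac{25}{204}\frac{1}{18^k}.\]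
   Context: $\mathbb{N}=\{1,2,3,\dots\}$. $J_{(k,\infty)}:=\bigcup_{j=k+1}^\infty J_j$. For a Borel set $B$ with $P(B)>0$, $P(\cdot|B)$ is the conditional probability $P(\cdot\cap B)/P(B)$. For a Borel probability $Q$ on $\mathbb{R}$ and $n\in\mathbb{N}$, an optimal set of $n$-means for $Q$ is a set $\alpha\subset\mathbb{R}$ with $\mathrm{card}(\alpha)\le n$ attaining $\inf\{\int\min_{a\in\alpha}(x-a)^2\,dQ(x):\alpha\subset\mathbb{R},\ \mathrm{card}(\alpha)\le n\}$. For a finite set $\alpha$ and Borel set $B$, $V(P,\alpha,B):=\int_B\min_{a\in\alpha}(x-a)^2\,dP(x)$. *)

theory Defs
  imports "HOL-Probability.Probability"
begin

definition Jset :: "nat \<Rightarrow> real set" where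
  "Jset n = {1 - 1 / 3 ^ (n - 1) .. 1 - 2 / 3 ^ n}"

definition Jtail :: "nat \<Rightarrow> real set" where
  "Jtail k = (\<Union>j\<in>{k+1..}. Jset j)"

text \<open>Density: (3/2)^n on J_n (n >= 1), 0 elsewhere (the J_n are pairwise disjoint).\<close>
definition dens :: "real \<Rightarrow> real" where
  "dens x = (if \<exists>n\<ge>1. x \<in> Jset n
             then (3/2) ^ (LEAST n. n \<ge> 1 \<and> x \<in> Jset n) else 0)"

definition Pm :: "real measure" where
  "Pm = density lborel (\<lambda>x. ennreal (dens x))"

definition cond_measure :: "real measure \<Rightarrow> real set \<Rightarrow> real measure" where
  "cond_measure M B = density M (\<lambda>x. indicator B x / emeasure M B)"

definition Verr :: "real measure \<Rightarrow> real set \<Rightarrow> real set \<Rightarrow> ennreal" where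
  "Verr Q \<alpha> B = (\<integral>\<^sup>+ x. ennreal (Min ((\<lambda>a. (x - a)\<^sup>2) ` \<alpha>)) * indicator B x \<partial>Q)"

definition qerr :: "real measure \<Rightarrow> real set \<Rightarrow> ennreal" where
  "qerr Q \<alpha> = (\<integral>\<^sup>+ x. ennreal (Min ((\<lambda>a. (x - a)\<^sup>2) ` \<alpha>)) \<partial>Q)"

definition admissible :: "nat \<Rightarrow> real set \<Rightarrow> bool" where
  "admissible n \<alpha> \<longleftrightarrow> finite \<alpha> \<and> \<alpha> \<noteq> {} \<and> card \<alpha> \<le> n"

definition optimal_n_means :: "real measure \<Rightarrow> nat \<Rightarrow> real set \<Rightarrow> bool" where
  "optimal_n_means Q n \<alpha> \<longleftrightarrow> admissible n \<alpha> \<and>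
     (\<forall>\<beta>. admissible n \<beta> \<longrightarrow> qerr Q \<alpha> \<le> qerr Q \<beta>)"

end

(*
  On J_k the density is constant, so P(.|J_k) is the uniform distribution on an interval of
  length 3^-k. For the uniform distribution on [a, c], m points have distortion at least
  (c - a)^3 / (12 m^2), with equality only for the m equally spaced midpoints. This is proved by
  induction on m: remove the rightmost point t and cut [a, c] at the midpoint s between t and the
  next point; the induction hypothesis bounds the error on [a, s], the single point t serves
  [s, c], and the sum of the two bounds exceeds the bound for m + 1 points by a square that
  vanishes only when [a, s] is m times as long as [s, c].
  On the tail J_(k,oo) the one-mean error of a point b is a quadratic in b, obtained by summing
  three geometric series over the intervals J_j, j > k.
*)

theory Submission
  imports Defs
begin

abbreviation min_sq_dist :: "real set \<Rightarrow> real \<Rightarrow> real" where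
  "min_sq_dist \<beta> x \<equiv> Min ((\<lambda>b. (x - b)\<^sup>2) ` \<beta>)"

definition interval_distortion :: "real set \<Rightarrow> real \<Rightarrow> real \<Rightarrow> real" where
  "interval_distortion \<beta> a c = integral {a..c} (min_sq_dist \<beta>)"

definition midpoints :: "nat \<Rightarrow> real \<Rightarrow> real \<Rightarrow> real set" where
  "midpoints m a c = {a + (2 * real i - 1) / (2 * real m) * (c - a) | i. 1 \<le> i \<and> i \<le> m}"

lemma integral_square_interval:
  fixes a c b :: real
  assumes "a \<le> c"
  shows "integral {a..c} (\<lambda>x. (x - b)\<^sup>2) = (c - a)^3 / 12 + (c - a) * (b - (a + c) / 2)\<^sup>2"
proof -
  have "((\<lambda>x. (x - b)\<^sup>2) has_integral (c - b)^3 / 3 - (a - b)^3 / 3) {a..c}"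
  proof (rule fundamental_theorem_of_calculus[OF assms])
    fix x assume "x \<in> {a..c}"
    have "((\<lambda>x. (x - b)^3 / 3) has_real_derivative (x - b)\<^sup>2) (at x within {a..c})"
      by (auto intro!: derivative_eq_intros simp: power2_eq_square)
    then show "((\<lambda>x. (x - b)^3 / 3) has_vector_derivative (x - b)\<^sup>2) (at x within {a..c})"
      by (simp add: has_real_derivative_iff_has_vector_derivative)
  qed
  then show ?thesis
    by (simp add: integral_unique power2_eq_square power3_eq_cube field_simps)
qed

lemma continuous_on_min_sq_dist:
  assumes "finite \<beta>" "\<beta> \<noteq> {}"
  shows "continuous_on S (min_sq_dist \<beta>)"
  using assms
proof (induction \<beta> rule: finite_ne_induct)
  case (insert b F)
  then have "min_sq_dist (insert b F) = (\<lambda>x. min ((x - b)\<^sup>2) (min_sq_dist F x))"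
    by (auto simp: Min_insert)
  then show ?case using insert by (auto intro!: continuous_intros)
qed (simp, intro continuous_intros)

lemma min_sq_dist_nonneg:
  assumes "finite \<beta>" "\<beta> \<noteq> {}"
  shows "0 \<le> min_sq_dist \<beta> x"
  using assms by (subst Min_ge_iff) (auto simp del: power2_diff)

lemma min_sq_dist_integrable:
  assumes "finite \<beta>" "\<beta> \<noteq> {}"
  shows "min_sq_dist \<beta> integrable_on {a..c}"
  by (intro integrable_continuous_interval continuous_on_min_sq_dist assms)

lemma interval_distortion_nonneg:
  assumes "finite \<beta>" "\<beta> \<noteq> {}" "a \<le> c"
  shows "0 \<le> interval_distortion \<beta> a c"
  unfolding interval_distortion_def
  by (intro integral_nonneg min_sq_dist_integrable min_sq_dist_nonneg assms)

lemma interval_distortion_singleton: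
  assumes "a \<le> c"
  shows "interval_distortion {b} a c = (c - a)^3 / 12 + (c - a) * (b - (a + c) / 2)\<^sup>2"
  using integral_square_interval[OF assms] by (simp add: interval_distortion_def)

lemma min_sq_dist_insert_left:
  fixes x t b0 :: real
  assumes "finite B" "b0 \<in> B" "\<forall>b\<in>B. b \<le> b0" "b0 < t" "x \<le> (b0 + t) / 2"
  shows "min_sq_dist (insert t B) x = min_sq_dist B x"
proof -
  have "min_sq_dist B x \<le> (x - b0)\<^sup>2" using assms by (intro Min_le) auto
  also have "(x - b0)\<^sup>2 \<le> (x - t)\<^sup>2"
  proof -
    have "(x - t)\<^sup>2 - (x - b0)\<^sup>2 = (b0 - t) * (2 * x - t - b0)" by (simp add: power2_eq_square algebra_simps)
    also have "\<dots> \<ge> 0" using assms by (intro mult_nonpos_nonpos) auto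
    finally show ?thesis by simp
  qed
  finally have "min_sq_dist B x \<le> (x - t)\<^sup>2" .
  then show ?thesis using assms by (subst image_insert, subst Min_insert) (auto simp: min_def)
qed

lemma min_sq_dist_insert_right:
  fixes x t b0 :: real
  assumes "finite B" "B \<noteq> {}" "\<forall>b\<in>B. b \<le> b0" "b0 < t" "x \<ge> (b0 + t) / 2"
  shows "min_sq_dist (insert t B) x = (x - t)\<^sup>2"
proof -
  have "(x - t)\<^sup>2 \<le> (x - b)\<^sup>2" if "b \<in> B" for b
  proof -
    have "(x - b)\<^sup>2 - (x - t)\<^sup>2 = (t - b) * (2 * x - b - t)" by (simp add: power2_eq_square algebra_simps)
    also have "\<dots> \<ge> 0" using assms that by (intro mult_nonneg_nonneg) auto
    finally show ?thesis by simp
  qed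
  then have "(x - t)\<^sup>2 \<le> min_sq_dist B x" using assms by (subst Min_ge_iff) auto
  then show ?thesis using assms by (subst image_insert, subst Min_insert) (auto simp: min_def)
qed

lemma interval_distortion_insert_split:
  fixes t b0 a c s :: real
  assumes "finite B" "b0 \<in> B" "\<forall>b\<in>B. b \<le> b0" "b0 < t" "s = (b0 + t) / 2" "a \<le> s" "s \<le> c"
  shows "interval_distortion (insert t B) a c
           = interval_distortion B a s + (c - s)^3 / 12 + (c - s) * (t - (s + c) / 2)\<^sup>2"
proof -
  have "interval_distortion (insert t B) a c
      = integral {a..s} (min_sq_dist (insert t B)) + integral {s..c} (min_sq_dist (insert t B))"
    unfolding interval_distortion_def
    by (rule Henstock_Kurzweil_Integration.integral_combine
          [OF assms(6,7) min_sq_dist_integrable, symmetric]) (use assms in auto)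
  also have "integral {a..s} (min_sq_dist (insert t B)) = interval_distortion B a s"
    unfolding interval_distortion_def
    by (intro integral_cong min_sq_dist_insert_left[OF assms(1-4)]) (use assms in auto)
  also have "integral {s..c} (min_sq_dist (insert t B)) = integral {s..c} (\<lambda>x. (x - t)\<^sup>2)"
    using assms by (intro integral_cong min_sq_dist_insert_right[OF assms(1) _ assms(3,4)]) auto
  finally show ?thesis using integral_square_interval[OF assms(7), of t] by simp
qed

lemma interval_distortion_insert_left:
  fixes t b0 a c :: real
  assumes "finite B" "b0 \<in> B" "\<forall>b\<in>B. b \<le> b0" "b0 < t" "c \<le> (b0 + t) / 2"
  shows "interval_distortion (insert t B) a c = interval_distortion B a c"
  unfolding interval_distortion_def
  by (intro integral_cong min_sq_dist_insert_left[OF assms(1-4)]) (use assms in auto)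

lemma interval_distortion_insert_right:
  fixes t b0 a c :: real
  assumes "finite B" "B \<noteq> {}" "\<forall>b\<in>B. b \<le> b0" "b0 < t" "(b0 + t) / 2 \<le> a" "a \<le> c"
  shows "interval_distortion (insert t B) a c = (c - a)^3 / 12 + (c - a) * (t - (a + c) / 2)\<^sup>2"
proof -
  have "interval_distortion (insert t B) a c = integral {a..c} (\<lambda>x. (x - t)\<^sup>2)"
    unfolding interval_distortion_def
    by (intro integral_cong min_sq_dist_insert_right[OF assms(1-4)]) (use assms in auto)
  then show ?thesis using integral_square_interval[OF assms(6)] by simp
qed

lemma midpoints_eq_image:
  "midpoints m a c = (\<lambda>i. a + (2 * real i - 1) / (2 * real m) * (c - a)) ` {1..m}"
  unfolding midpoints_def by auto

lemma finite_midpoints: "finite (midpoints m a c)"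
  by (simp add: midpoints_eq_image)

lemma midpoints_one: "midpoints 1 a c = {(a + c) / 2}"
  by (simp add: midpoints_eq_image field_simps)

lemma midpoints_Suc:
  fixes a c s :: real
  assumes "m \<ge> 1" "s = a + real m * (c - a) / (real m + 1)"
  shows "midpoints (Suc m) a c = insert ((s + c) / 2) (midpoints m a s)"
proof -
  let ?g = "\<lambda>i. a + (2 * real i - 1) / (2 * real (Suc m)) * (c - a)"
  have rescale: "x / (2 * M) * (M * L / (M + 1)) = x / (2 * (M + 1)) * L"
    if "M > 0" for x L M :: real
    using that by (simp add: field_simps)
  have "midpoints (Suc m) a c = insert (?g (Suc m)) (?g ` {1..m})"
    unfolding midpoints_eq_image by (simp add: atLeastAtMostSuc_conv del: of_nat_Suc)
  also have "?g (Suc m) = (s + c) / 2"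
    unfolding assms(2) by (simp add: field_simps)
  also have "?g ` {1..m} = midpoints m a s"
    unfolding midpoints_eq_image
    using rescale[of "real m"] assms by (intro image_cong) (auto simp: add.commute)
  finally show ?thesis .
qed

lemma midpoints_max:
  fixes a c :: real
  assumes "m \<ge> 1" "a \<le> c"
  defines "b0 \<equiv> a + (2 * real m - 1) / (2 * real m) * (c - a)"
  shows "b0 \<in> midpoints m a c" "\<forall>b\<in>midpoints m a c. b \<le> b0"
proof -
  show "b0 \<in> midpoints m a c" using assms unfolding midpoints_eq_image by auto
  have "(2 * real i - 1) / (2 * real m) * (c - a) \<le> (2 * real m - 1) / (2 * real m) * (c - a)"
    if "i \<le> m" for i
    using that assms by (intro mult_right_mono divide_right_mono) auto
  then show "\<forall>b\<in>midpoints m a c. b \<le> b0" unfolding midpoints_eq_image b0_def by auto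
qed

text \<open>Serving lengths u and v by p points and by one point costs at least as much as serving
  length u + v by p + 1 equally spaced points; the excess is a square, vanishing iff u = p v.\<close>

lemma cube_split_gap:
  fixes p u v :: real
  assumes "p > 0"
  shows "u^3 / (12 * p^2) + v^3 / 12 - (u + v)^3 / (12 * (p + 1)^2)
           = (u - p * v)^2 * (((2 * p + 1) * u + p * (p + 2) * v) / (12 * p^2 * (p + 1)^2))"
proof -
  have "p \<noteq> 0" "p + 1 \<noteq> 0" using assms by auto
  then show ?thesis
    by (simp add: divide_simps) (simp add: algebra_simps power2_eq_square power3_eq_cube)
qed

lemma interval_distortion_midpoints:
  fixes a c :: real
  assumes "m \<ge> 1" "a < c"
  shows "card (midpoints m a c) = m"
    and "interval_distortion (midpoints m a c) a c = (c - a)^3 / (12 * (real m)^2)"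
proof -
  have "card (midpoints m a c) = m \<and>
        interval_distortion (midpoints m a c) a c = (c - a)^3 / (12 * (real m)^2)"
    using assms
  proof (induction m arbitrary: a c rule: nat_induct_at_least)
    case base
    then show ?case using interval_distortion_singleton[of a c] midpoints_one[of a c] by simp
  next
    case (Suc m)
    define s where "s = a + real m * (c - a) / (real m + 1)"
    define b0 where "b0 = a + (2 * real m - 1) / (2 * real m) * (s - a)"
    have m: "real m > 0" using Suc by auto
    have sa: "s - a = real m * (c - a) / (real m + 1)" and cs: "c - s = (c - a) / (real m + 1)"
      unfolding s_def using m by (simp_all add: field_simps)
    have "0 < s - a" "0 < c - s" unfolding sa cs using m Suc.prems by auto
    then have "a < s" "s < c" by simp_all
    have b0: "b0 \<in> midpoints m a s" "\<forall>b\<in>midpoints m a s. b \<le> b0"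
      unfolding b0_def using midpoints_max[OF Suc(1), of a s] \<open>a < s\<close> by auto
    have "x = (a + (2 * M - 1) / (2 * M) * (x - a) + (x + c) / 2) / 2"
      if "M > 0" "x = a + M * (c - a) / (M + 1)" for M x :: real
    proof -
      have "M + 1 \<noteq> 0" using that by simp
      then show ?thesis using that by (simp add: field_simps)
    qed
    from this[OF m s_def] have s_mid: "s = (b0 + (s + c) / 2) / 2" unfolding b0_def .
    have "b0 < (s + c) / 2" using s_mid \<open>s < c\<close> by argo
    have IH: "card (midpoints m a s) = m"
      "interval_distortion (midpoints m a s) a s = (s - a)^3 / (12 * (real m)^2)"
      using Suc.IH[OF \<open>a < s\<close>] by auto
    have "interval_distortion (midpoints (Suc m) a c) a c
        = interval_distortion (midpoints m a s) a s + (c - s)^3 / 12"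
      unfolding midpoints_Suc[OF Suc(1) s_def]
      using interval_distortion_insert_split[OF finite_midpoints b0 \<open>b0 < (s + c) / 2\<close> s_mid]
        \<open>a < s\<close> \<open>s < c\<close> by simp
    also have "\<dots> = (c - a)^3 / (12 * (real (Suc m))^2)"
    proof -
      have balanced: "s - a - real m * (c - s) = 0" unfolding sa cs by simp
      have "(s - a) + (c - s) = c - a" by simp
      from cube_split_gap[OF m, of "s - a" "c - s", unfolded balanced this]
      show ?thesis unfolding IH by simp
    qed
    moreover have "(s + c) / 2 \<notin> midpoints m a s"
      using b0(2) \<open>b0 < (s + c) / 2\<close> by force
    ultimately show ?case
      using IH(1) unfolding midpoints_Suc[OF Suc(1) s_def] by (simp add: finite_midpoints)
  qed
  then show "card (midpoints m a c) = m"
    "interval_distortion (midpoints m a c) a c = (c - a)^3 / (12 * (real m)^2)" by auto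
qed

lemma interval_distortion_insert_ge:
  fixes a c s t b0 :: real
  assumes "m \<ge> 1" and B: "finite B" "b0 \<in> B" "\<forall>b\<in>B. b \<le> b0" "b0 < t"
    and s: "s = (b0 + t) / 2" "a < s" "s < c"
    and IH: "(s - a)^3 / (12 * (real m)^2) \<le> interval_distortion B a s"
      "interval_distortion B a s = (s - a)^3 / (12 * (real m)^2) \<Longrightarrow> B = midpoints m a s"
  shows "(c - a)^3 / (12 * (real (Suc m))^2) \<le> interval_distortion (insert t B) a c"
    and "interval_distortion (insert t B) a c = (c - a)^3 / (12 * (real (Suc m))^2)
           \<Longrightarrow> insert t B = midpoints (Suc m) a c"
proof -
  define u where "u = s - a"
  define v where "v = c - s"
  define w where "w = ((2 * real m + 1) * u + real m * (real m + 2) * v)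
                        / (12 * (real m)^2 * (real m + 1)^2)"
  have m: "real m > 0" using \<open>m \<ge> 1\<close> by simp
  have "u > 0" "v > 0" unfolding u_def v_def using s by auto
  then have "w > 0" unfolding w_def using m by (intro divide_pos_pos add_pos_pos) auto
  have "u + v = c - a" unfolding u_def v_def by simp
  note gap = cube_split_gap[OF m, of u v, unfolded this, folded w_def]
  have "interval_distortion (insert t B) a c
      = interval_distortion B a s + v^3 / 12 + v * (t - (s + c) / 2)\<^sup>2"
    using interval_distortion_insert_split[OF B s(1), of a c] s(2,3) unfolding v_def by simp
  then have split: "interval_distortion (insert t B) a c - (c - a)^3 / (12 * (real (Suc m))^2)
      = (interval_distortion B a s - u^3 / (12 * (real m)^2)) + (u - real m * v)^2 * w
        + v * (t - (s + c) / 2)\<^sup>2"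
    using gap unfolding of_nat_Suc add.commute[of 1] by linarith
  have nonneg: "0 \<le> interval_distortion B a s - u^3 / (12 * (real m)^2)"
    "0 \<le> (u - real m * v)^2 * w" "0 \<le> v * (t - (s + c) / 2)\<^sup>2"
    using IH(1) \<open>w > 0\<close> \<open>v > 0\<close> unfolding u_def by auto
  then show "(c - a)^3 / (12 * (real (Suc m))^2) \<le> interval_distortion (insert t B) a c"
    using split by linarith
  assume "interval_distortion (insert t B) a c = (c - a)^3 / (12 * (real (Suc m))^2)"
  then have "interval_distortion B a s = u^3 / (12 * (real m)^2)"
    and "(u - real m * v)^2 * w = 0" and "v * (t - (s + c) / 2)\<^sup>2 = 0"
    using split nonneg by linarith+
  then have "B = midpoints m a s" and "u = real m * v" and "t = (s + c) / 2"
    using IH(2) \<open>w > 0\<close> \<open>v > 0\<close> unfolding u_def by auto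
  moreover have "s = a + real m * (c - a) / (real m + 1)"
    using \<open>u = real m * v\<close> m unfolding u_def v_def by (simp add: field_simps)
  ultimately show "insert t B = midpoints (Suc m) a c"
    by (simp only: midpoints_Suc[OF \<open>m \<ge> 1\<close>])
qed

lemma interval_distortion_ge:
  fixes a c :: real
  assumes "m \<ge> 1" "finite \<beta>" "card \<beta> = m" "a < c"
  shows "(c - a)^3 / (12 * (real m)^2) \<le> interval_distortion \<beta> a c"
    and "interval_distortion \<beta> a c = (c - a)^3 / (12 * (real m)^2) \<Longrightarrow> \<beta> = midpoints m a c"
proof -
  have "(c - a)^3 / (12 * (real m)^2) \<le> interval_distortion \<beta> a c \<and>
        (interval_distortion \<beta> a c = (c - a)^3 / (12 * (real m)^2) \<longrightarrow> \<beta> = midpoints m a c)"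
    using assms
  proof (induction m arbitrary: \<beta> a c rule: nat_induct_at_least)
    case base
    then obtain b where "\<beta> = {b}" by (auto simp: card_Suc_eq)
    then show ?case
      using interval_distortion_singleton[of a c b] midpoints_one[of a c] base.prems by auto
  next
    case (Suc m)
    define t where "t = Max \<beta>"
    define B where "B = \<beta> - {t}"
    define b0 where "b0 = Max B"
    have "t \<in> \<beta>" unfolding t_def using Suc.prems by (intro Max_in) auto
    then have \<beta>: "\<beta> = insert t B" and "finite B" "card B = m"
      unfolding B_def using Suc.prems by auto
    then have "B \<noteq> {}" using Suc.hyps by auto
    then have B: "b0 \<in> B" "\<forall>b\<in>B. b \<le> b0" unfolding b0_def using \<open>finite B\<close> by auto
    have "b0 < t"
      using B(1) Suc.prems(1) Max_ge[of \<beta> b0] unfolding B_def t_def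
      by (metis DiffE insertI1 order_le_imp_less_or_eq)
    have m: "real m > 0" using Suc.hyps by simp
    have opt_lt: "(c - a)^3 / (12 * (real (Suc m))^2) < (c - a)^3 / (12 * (real m)^2)"
      using m Suc.prems by (intro divide_strict_left_mono mult_strict_left_mono power_strict_mono) auto
    have opt_lt1: "(c - a)^3 / (12 * (real (Suc m))^2) < (c - a)^3 / 12"
    proof -
      have "1 < (real (Suc m))^2" by (intro one_less_power) (use m in auto)
      then show ?thesis using Suc.prems by (intro divide_strict_left_mono) auto
    qed
    consider "c \<le> (b0 + t) / 2" | "(b0 + t) / 2 \<le> a" | "a < (b0 + t) / 2" "(b0 + t) / 2 < c"
      by linarith
    then show ?case
    proof cases
      case 1
      then show ?thesis
        using interval_distortion_insert_left[OF \<open>finite B\<close> B \<open>b0 < t\<close> 1] opt_lt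
          Suc.IH[OF \<open>finite B\<close> \<open>card B = m\<close> Suc.prems(3)] unfolding \<beta> by auto
    next
      case 2
      have "0 \<le> (c - a) * (t - (a + c) / 2)\<^sup>2" using Suc.prems(3) by simp
      then have "(c - a)^3 / (12 * (real (Suc m))^2) < interval_distortion (insert t B) a c"
        using interval_distortion_insert_right
            [OF \<open>finite B\<close> \<open>B \<noteq> {}\<close> B(2) \<open>b0 < t\<close> 2 less_imp_le[OF Suc.prems(3)]]
          opt_lt1 by linarith
      then show ?thesis unfolding \<beta> by simp
    next
      case 3
      show ?thesis
        using interval_distortion_insert_ge[OF Suc.hyps \<open>finite B\<close> B \<open>b0 < t\<close> refl 3]
          Suc.IH[OF \<open>finite B\<close> \<open>card B = m\<close> 3(1)] unfolding \<beta> by auto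
    qed
  qed
  then show "(c - a)^3 / (12 * (real m)^2) \<le> interval_distortion \<beta> a c"
    and "interval_distortion \<beta> a c = (c - a)^3 / (12 * (real m)^2) \<Longrightarrow> \<beta> = midpoints m a c"
    by auto
qed

lemma interval_distortion_admissible_ge:
  fixes a c :: real
  assumes "admissible n \<beta>" "a < c"
  shows "(c - a)^3 / (12 * (real n)^2) \<le> interval_distortion \<beta> a c"
    and "interval_distortion \<beta> a c = (c - a)^3 / (12 * (real n)^2) \<Longrightarrow> \<beta> = midpoints n a c"
proof -
  define m where "m = card \<beta>"
  have "finite \<beta>" "m \<ge> 1" "m \<le> n"
    using assms(1) unfolding admissible_def m_def by (auto simp: Suc_le_eq card_gt_0_iff)
  note ge = interval_distortion_ge[OF \<open>m \<ge> 1\<close> \<open>finite \<beta>\<close> m_def[symmetric] \<open>a < c\<close>]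
  have mono: "(c - a)^3 / (12 * (real n)^2) \<le> (c - a)^3 / (12 * (real m)^2)"
    using \<open>m \<ge> 1\<close> \<open>m \<le> n\<close> \<open>a < c\<close> by (intro divide_left_mono mult_left_mono power_mono) auto
  with ge(1) show "(c - a)^3 / (12 * (real n)^2) \<le> interval_distortion \<beta> a c" by simp
  assume eq: "interval_distortion \<beta> a c = (c - a)^3 / (12 * (real n)^2)"
  have "m = n"
  proof (rule ccontr)
    assume "m \<noteq> n"
    then have "(c - a)^3 / (12 * (real n)^2) < (c - a)^3 / (12 * (real m)^2)"
      using \<open>m \<ge> 1\<close> \<open>m \<le> n\<close> \<open>a < c\<close>
      by (intro divide_strict_left_mono mult_strict_left_mono power_strict_mono) auto
    with ge(1) eq show False by simp
  qed
  with ge(2) eq show "\<beta> = midpoints n a c" by simp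
qed

lemma optimal_n_means_iff_midpoints:
  fixes a c C :: real
  assumes "a < c" "n \<ge> 1" "C > 0"
    and err: "\<And>\<beta>. finite \<beta> \<Longrightarrow> \<beta> \<noteq> {} \<Longrightarrow> qerr Q \<beta> = ennreal (C * interval_distortion \<beta> a c)"
  shows "optimal_n_means Q n \<beta> \<longleftrightarrow> \<beta> = midpoints n a c"
proof -
  let ?M = "midpoints n a c"
  have M: "admissible n ?M" "interval_distortion ?M a c = (c - a)^3 / (12 * (real n)^2)"
    using interval_distortion_midpoints[OF assms(2,1)] assms(2)
    by (auto simp: admissible_def finite_midpoints)
  have fin: "finite \<gamma>" "\<gamma> \<noteq> {}" if "admissible n \<gamma>" for \<gamma>
    using that unfolding admissible_def by auto
  have qerr_le_iff: "qerr Q \<gamma> \<le> qerr Q ?M \<longleftrightarrow> interval_distortion \<gamma> a c \<le> interval_distortion ?M a c"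
    if "admissible n \<gamma>" for \<gamma>
    using \<open>C > 0\<close> \<open>a < c\<close> interval_distortion_nonneg[OF fin[OF that]]
      interval_distortion_nonneg[OF fin[OF M(1)]]
    by (simp add: err fin that M(1) ennreal_le_iff)
  have qerr_ge: "qerr Q ?M \<le> qerr Q \<gamma>" if "admissible n \<gamma>" for \<gamma>
    using interval_distortion_admissible_ge(1)[OF that \<open>a < c\<close>] \<open>C > 0\<close>
    by (simp add: err fin that M(1) M(2)[symmetric] ennreal_leI)
  show ?thesis
  proof
    assume "optimal_n_means Q n \<beta>"
    then have "admissible n \<beta>" "qerr Q \<beta> \<le> qerr Q ?M"
      using M(1) unfolding optimal_n_means_def by auto
    then show "\<beta> = ?M"
      using interval_distortion_admissible_ge[OF _ \<open>a < c\<close>] qerr_le_iff M(2) by force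
  qed (use M(1) qerr_ge in \<open>simp add: optimal_n_means_def\<close>)
qed

lemma Jset_eq:
  assumes "j \<ge> 1"
  shows "Jset j = {1 - 3 / 3 ^ j .. 1 - 2 / 3 ^ j}"
proof -
  have "(3::real) ^ j = 3 * 3 ^ (j - 1)" using assms by (cases j) auto
  then show ?thesis by (simp add: Jset_def field_simps)
qed

lemma Jset_less:
  assumes "i < j" "x \<in> Jset i" "y \<in> Jset j"
  shows "x < y"
proof -
  have "(3::real) ^ i \<le> 3 ^ (j - 1)" using assms(1) by (intro power_increasing) auto
  then have "1 / (3::real) ^ (j - 1) \<le> 1 / 3 ^ i" by (intro divide_left_mono) auto
  moreover have "2 / (3::real) ^ i > 1 / 3 ^ i" by (simp add: divide_strict_right_mono)
  ultimately show ?thesis using assms(2,3) unfolding Jset_def by auto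
qed

lemma Jset_eq_Jset:
  assumes "x \<in> Jset i" "x \<in> Jset j"
  shows "i = j"
  using Jset_less[of i j x x] Jset_less[of j i x x] assms by (cases i j rule: linorder_cases) auto

lemma disjoint_family_Jset: "disjoint_family (\<lambda>i. Jset (f i))" if "inj f"
  using Jset_eq_Jset that unfolding disjoint_family_on_def inj_def by blast

lemma dens_Jset:
  assumes "j \<ge> 1" "x \<in> Jset j"
  shows "dens x = (3/2) ^ j"
proof -
  have "(LEAST n. n \<ge> 1 \<and> x \<in> Jset n) = j"
    by (rule Least_equality) (use assms Jset_eq_Jset in auto)
  then show ?thesis using assms unfolding dens_def by auto
qed

lemma dens_eq_suminf: "ennreal (dens x) = (\<Sum>i. ennreal ((3/2) ^ Suc i) * indicator (Jset (Suc i)) x)"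
proof (cases "\<exists>j\<ge>1. x \<in> Jset j")
  case True
  then obtain j where "j \<ge> 1" "x \<in> Jset j" by blast
  then obtain i where i: "x \<in> Jset (Suc i)" by (cases j) auto
  show ?thesis
    using suminf_cmult_indicator[OF disjoint_family_Jset[OF inj_Suc] i, of "\<lambda>i. ennreal ((3/2) ^ Suc i)"]
    by (simp add: dens_Jset[OF _ i])
next
  case False
  then show ?thesis unfolding dens_def by auto
qed

lemma sets_Pm [measurable_cong]: "sets Pm = sets borel"
  unfolding Pm_def by simp

lemma nn_integral_Pm_Jset:
  assumes "j \<ge> 1" "continuous_on UNIV g" "\<And>x. 0 \<le> g x"
  shows "(\<integral>\<^sup>+ x. ennreal (g x) * indicator (Jset j) x \<partial>Pm) = ennreal ((3/2)^j * integral (Jset j) g)"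
proof -
  have g: "g \<in> borel_measurable borel" by (rule borel_measurable_continuous_onI[OF assms(2)])
  have "(\<integral>\<^sup>+ x. ennreal (g x) * indicator (Jset j) x \<partial>Pm)
      = (\<integral>\<^sup>+ x. ennreal (dens x) * (ennreal (g x) * indicator (Jset j) x) \<partial>lborel)"
    unfolding Pm_def by (rule nn_integral_density) (use g in \<open>auto simp: dens_eq_suminf Jset_def\<close>)
  also have "\<dots> = (\<integral>\<^sup>+ x. ennreal ((3/2)^j * g x) * indicator (Jset j) x \<partial>lborel)"
    by (rule nn_integral_cong) (auto simp: dens_Jset[OF assms(1)] ennreal_mult assms(3) split: split_indicator)
  also have "\<dots> = ennreal (integral (Jset j) (\<lambda>x. (3/2)^j * g x))"
  proof (rule nn_integral_has_integral_lebesgue')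
    have "(\<lambda>x. (3/2)^j * g x) integrable_on Jset j" unfolding Jset_def
      by (intro integrable_continuous_interval continuous_intros continuous_on_subset[OF assms(2)]) auto
    then show "((\<lambda>x. (3/2)^j * g x) has_integral integral (Jset j) (\<lambda>x. (3/2)^j * g x)) (Jset j)"
      by (rule integrable_integral)
  qed (use assms(3) in simp)
  finally show ?thesis by simp
qed

lemma emeasure_Pm_Jset:
  assumes "j \<ge> 1"
  shows "emeasure Pm (Jset j) = ennreal ((1/2)^j)"
proof -
  have "emeasure Pm (Jset j) = (\<integral>\<^sup>+ x. ennreal 1 * indicator (Jset j) x \<partial>Pm)"
    by (simp add: Jset_def)
  also have "\<dots> = ennreal ((3/2)^j * (1 / 3^j))"
    using nn_integral_Pm_Jset[OF assms, of "\<lambda>_. 1"] by (simp add: Jset_eq[OF assms] field_simps)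
  also have "(3/2::real)^j * (1 / 3^j) = (1/2)^j" by (simp add: power_divide)
  finally show ?thesis .
qed

lemma nn_integral_cond_measure:
  assumes "B \<in> sets M" "emeasure M B = ennreal e" "e > 0" "h \<in> borel_measurable M"
  shows "(\<integral>\<^sup>+ x. h x \<partial>cond_measure M B) = ennreal (1/e) * (\<integral>\<^sup>+ x. h x * indicator B x \<partial>M)"
proof -
  have "(\<integral>\<^sup>+ x. h x \<partial>cond_measure M B) = (\<integral>\<^sup>+ x. indicator B x / emeasure M B * h x \<partial>M)"
    unfolding cond_measure_def by (rule nn_integral_density) (use assms in auto)
  also have "\<dots> = (\<integral>\<^sup>+ x. ennreal (1/e) * (h x * indicator B x) \<partial>M)"
    by (rule nn_integral_cong)
      (auto simp: assms(2,3) divide_ennreal[symmetric] ennreal_times_divide mult.commute split: split_indicator)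
  also have "\<dots> = ennreal (1/e) * (\<integral>\<^sup>+ x. h x * indicator B x \<partial>M)"
    by (rule nn_integral_cmult) (use assms in auto)
  finally show ?thesis .
qed

lemma Jtail_eq: "Jtail k = (\<Union>i. Jset (i + k + 1))"
proof -
  have "{k + 1..} = (\<lambda>i. i + k + 1) ` UNIV"
    using image_add_atLeast[of "k + 1" 0] by (simp add: atLeast_0 add.commute)
  then show ?thesis unfolding Jtail_def by simp
qed

lemma sets_Jtail: "Jtail k \<in> sets borel"
  unfolding Jtail_eq by (auto simp: Jset_def)

lemma disjoint_family_Jset_tail: "disjoint_family (\<lambda>i. Jset (i + k + 1))"
  by (rule disjoint_family_Jset) (simp add: inj_def)

lemma nn_integral_Pm_Jtail:
  assumes "continuous_on UNIV g" "\<And>x. 0 \<le> g x"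
  shows "(\<integral>\<^sup>+ x. ennreal (g x) * indicator (Jtail k) x \<partial>Pm)
     = (\<Sum>i. ennreal ((3/2)^(i + k + 1) * integral (Jset (i + k + 1)) g))"
proof -
  have g: "g \<in> borel_measurable borel" by (rule borel_measurable_continuous_onI[OF assms(1)])
  have "(\<integral>\<^sup>+ x. ennreal (g x) * indicator (Jtail k) x \<partial>Pm)
      = (\<integral>\<^sup>+ x. (\<Sum>i. ennreal (g x) * indicator (Jset (i + k + 1)) x) \<partial>Pm)"
    by (simp only: Jtail_eq ennreal_suminf_cmult suminf_indicator[OF disjoint_family_Jset_tail])
  also have "\<dots> = (\<Sum>i. \<integral>\<^sup>+ x. ennreal (g x) * indicator (Jset (i + k + 1)) x \<partial>Pm)"
    by (rule nn_integral_suminf) (use g in \<open>auto simp: Jset_def\<close>)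
  also have "\<dots> = (\<Sum>i. ennreal ((3/2)^(i + k + 1) * integral (Jset (i + k + 1)) g))"
    by (subst nn_integral_Pm_Jset) (use assms in auto)
  finally show ?thesis .
qed

lemma geometric_tail_sums:
  fixes q :: real
  assumes "\<bar>q\<bar> < 1"
  shows "(\<lambda>i. q ^ (i + k + 1)) sums (q ^ k * (q / (1 - q)))"
  using sums_mult[OF geometric_sums[of q], of "q ^ (k + 1)"] assms
  by (simp add: power_add mult_ac)

lemma emeasure_Pm_Jtail: "emeasure Pm (Jtail k) = ennreal ((1/2)^k)"
proof -
  have "emeasure Pm (Jtail k) = (\<Sum>i. emeasure Pm (Jset (i + k + 1)))"
    unfolding Jtail_eq
    using disjoint_family_Jset_tail by (intro suminf_emeasure[symmetric]) (auto simp: Jset_def sets_Pm)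
  also have "\<dots> = (\<Sum>i. ennreal ((1/2)^(i + k + 1)))"
    using emeasure_Pm_Jset[of "_ + k + 1"] by simp
  also have "\<dots> = ennreal ((1/2)^k)"
    using geometric_tail_sums[of "1/2" k] by (intro suminf_ennreal_eq) auto
  finally show ?thesis .
qed

lemma integral_Jset_square:
  assumes "j \<ge> 1"
  shows "(3/2)^j * integral (Jset j) (\<lambda>x. (x - b)\<^sup>2)
           = (1 - b)^2 * (1/2)^j - 5 * (1 - b) * (1/6)^j + 19/3 * (1/18)^j"
proof -
  define T :: real where "T = 1 / 3 ^ j"
  have "T > 0" unfolding T_def by simp
  have "Jset j = {1 - 3 * T .. 1 - 2 * T}" unfolding Jset_eq[OF assms] T_def by simp
  then have "integral (Jset j) (\<lambda>x. (x - b)\<^sup>2) = T^3 / 12 + T * (b - (2 - 5 * T) / 2)\<^sup>2"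
    using integral_square_interval[of "1 - 3 * T" "1 - 2 * T" b] \<open>T > 0\<close> by simp
  also have "\<dots> = (1 - b)^2 * T - 5 * (1 - b) * T^2 + 19/3 * T^3"
    by (simp add: power2_eq_square power3_eq_cube field_simps)
  finally have I: "integral (Jset j) (\<lambda>x. (x - b)\<^sup>2)
      = (1 - b)^2 * T - 5 * (1 - b) * T^2 + 19/3 * T^3" .
  have "(3/2)^j * integral (Jset j) (\<lambda>x. (x - b)\<^sup>2)
      = (1 - b)^2 * ((3/2)^j * T) - 5 * (1 - b) * ((3/2)^j * T^2) + 19/3 * ((3/2)^j * T^3)"
    unfolding I by (simp add: algebra_simps)
  moreover have "(3/2::real)^j * T = (1/2)^j" "(3/2::real)^j * T^2 = (1/6)^j"
    "(3/2::real)^j * T^3 = (1/18)^j"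
    unfolding T_def by (induction j) (simp_all add: field_simps)
  ultimately show ?thesis by simp
qed

lemma Verr_Pm_Jtail_singleton:
  "Verr Pm {b} (Jtail k) = ennreal ((1/2)^k * (b - (1 - (1/3)^k / 2))\<^sup>2 + 25/204 * (1/18)^k)"
proof -
  have "Verr Pm {b} (Jtail k)
      = (\<Sum>i. ennreal ((3/2)^(i + k + 1) * integral (Jset (i + k + 1)) (\<lambda>x. (x - b)\<^sup>2)))"
    unfolding Verr_def by (simp add: nn_integral_Pm_Jtail continuous_intros)
  also have "\<dots> = ennreal ((1 - b)^2 * (1/2)^k - (1 - b) * (1/6)^k + 19/51 * (1/18)^k)"
  proof (rule suminf_ennreal_eq)
    have "(\<lambda>i. (1 - b)^2 * (1/2)^(i + k + 1) - 5 * (1 - b) * (1/6)^(i + k + 1)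
               + 19/3 * (1/18)^(i + k + 1))
          sums ((1 - b)^2 * ((1/2)^k * ((1/2) / (1 - 1/2)))
                - 5 * (1 - b) * ((1/6)^k * ((1/6) / (1 - 1/6)))
                + 19/3 * ((1/18)^k * ((1/18) / (1 - 1/18))))"
      by (intro sums_add sums_diff sums_mult geometric_tail_sums) auto
    moreover have "(1 - b)^2 * ((1/2)^k * ((1/2) / (1 - 1/2)))
                - 5 * (1 - b) * ((1/6)^k * ((1/6) / (1 - 1/6)))
                + 19/3 * ((1/18)^k * ((1/18) / (1 - 1/18)))
        = (1 - b)^2 * (1/2)^k - (1 - b) * (1/6)^k + 19/51 * (1/18::real)^k"
      by simp
    ultimately show "(\<lambda>i. (3/2)^(i + k + 1) * integral (Jset (i + k + 1)) (\<lambda>x. (x - b)\<^sup>2))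
               sums ((1 - b)^2 * (1/2)^k - (1 - b) * (1/6)^k + 19/51 * (1/18)^k)"
      by (simp only:) (simp add: integral_Jset_square del: add_Suc_right)
    show "0 \<le> (3/2)^(i + k + 1) * integral (Jset (i + k + 1)) (\<lambda>x. (x - b)\<^sup>2)" for i
      unfolding Jset_def
      by (intro mult_nonneg_nonneg integral_nonneg integrable_continuous_interval continuous_intros) auto
  qed
  also have "(1 - b)^2 * (1/2)^k - (1 - b) * (1/6)^k + 19/51 * (1/18)^k
      = (1/2)^k * (b - (1 - (1/3)^k / 2))\<^sup>2 + 25/204 * (1/18::real)^k"
  proof -
    have "(1/6::real)^k = (1/2)^k * (1/3)^k" "(1/18::real)^k = (1/2)^k * ((1/3)^k)^2"
      by (induction k) (simp_all add: field_simps)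
    then show ?thesis by (simp add: power2_eq_square field_simps)
  qed
  finally show ?thesis .
qed

lemma optimal_one_mean_iff:
  fixes w r \<mu> :: real
  assumes "w > 0" "r \<ge> 0" and err: "\<And>b. qerr Q {b} = ennreal (w * (b - \<mu>)\<^sup>2 + r)"
  shows "optimal_n_means Q 1 \<alpha> \<longleftrightarrow> \<alpha> = {\<mu>}"
proof -
  have adm: "admissible 1 \<beta> \<longleftrightarrow> (\<exists>b. \<beta> = {b})" for \<beta>
    unfolding admissible_def by (auto simp: le_Suc_eq card_1_singleton_iff)
  have "qerr Q {\<mu>} \<le> qerr Q {b}" for b
    using assms by (simp add: err ennreal_leI)
  moreover have "qerr Q {b} \<le> qerr Q {\<mu>} \<Longrightarrow> b = \<mu>" for b
    using assms by (simp add: err ennreal_le_iff)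
  ultimately show ?thesis unfolding optimal_n_means_def adm by blast
qed

lemma Verr_Pm_Jset:
  assumes "k \<ge> 1" "finite \<beta>" "\<beta> \<noteq> {}"
  shows "Verr Pm \<beta> (Jset k)
           = ennreal ((3/2)^k * interval_distortion \<beta> (1 - 1 / 3^(k - 1)) (1 - 2 / 3^k))"
  unfolding Verr_def interval_distortion_def
  using nn_integral_Pm_Jset[OF assms(1) continuous_on_min_sq_dist min_sq_dist_nonneg, OF assms(2,3) assms(2,3)]
  by (simp add: Jset_def)

lemma qerr_cond_Pm_Jset:
  assumes "k \<ge> 1" "finite \<beta>" "\<beta> \<noteq> {}"
  shows "qerr (cond_measure Pm (Jset k)) \<beta>
           = ennreal (3^k * interval_distortion \<beta> (1 - 1 / 3^(k - 1)) (1 - 2 / 3^k))"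
proof -
  have "min_sq_dist \<beta> \<in> borel_measurable borel"
    by (intro borel_measurable_continuous_onI continuous_on_min_sq_dist assms)
  then have "qerr (cond_measure Pm (Jset k)) \<beta> = ennreal (1 / (1/2)^k) * Verr Pm \<beta> (Jset k)"
    unfolding qerr_def Verr_def
    by (intro nn_integral_cond_measure[OF _ emeasure_Pm_Jset[OF assms(1)]]) (auto simp: Jset_def)
  also have "\<dots> = ennreal (3^k * interval_distortion \<beta> (1 - 1 / 3^(k - 1)) (1 - 2 / 3^k))"
    unfolding Verr_Pm_Jset[OF assms]
    by (simp add: ennreal_mult'[symmetric] power_divide)
  finally show ?thesis .
qed

lemma qerr_cond_Pm_Jtail_singleton:
  "qerr (cond_measure Pm (Jtail k)) {b} = ennreal ((b - (1 - (1/3)^k / 2))\<^sup>2 + 25/204 * (1/9)^k)"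
proof -
  have "qerr (cond_measure Pm (Jtail k)) {b} = ennreal (1 / (1/2)^k) * Verr Pm {b} (Jtail k)"
    unfolding qerr_def Verr_def
    by (intro nn_integral_cond_measure[OF _ emeasure_Pm_Jtail])
      (auto simp: sets_Pm sets_Jtail intro!: borel_measurable_continuous_onI continuous_intros)
  also have "\<dots> = ennreal ((b - (1 - (1/3)^k / 2))\<^sup>2 + 25/204 * (1/9)^k)"
  proof -
    have "(2::real)^k * (1/2)^k = 1" "(2::real)^k * (1/18)^k = (1/9)^k"
      by (simp_all flip: power_mult_distrib)
    then show ?thesis
      unfolding Verr_Pm_Jtail_singleton
      by (simp add: ennreal_mult'[symmetric] power_divide algebra_simps)
  qed
  finally show ?thesis .
qed

lemma Jset_length:
  assumes "k \<ge> 1"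
  shows "(1 - 2 / 3 ^ k) - (1 - 1 / 3 ^ (k - 1)) = (1 / 3 ^ k :: real)"
  using Jset_eq[OF assms] unfolding Jset_def by (simp add: field_simps)

lemma Jset_left_less_right:
  assumes "k \<ge> 1"
  shows "1 - 1 / 3 ^ (k - 1) < (1 - 2 / 3 ^ k :: real)"
  using Jset_length[OF assms] by (metis diff_gt_0_iff_gt zero_less_divide_1_iff zero_less_numeral zero_less_power)

lemma optimal_n_means_cond_Pm_Jset_iff:
  assumes "k \<ge> 1" "n \<ge> 1"
  shows "optimal_n_means (cond_measure Pm (Jset k)) n \<beta>
           \<longleftrightarrow> \<beta> = midpoints n (1 - 1 / 3 ^ (k - 1)) (1 - 2 / 3 ^ k)"
  using qerr_cond_Pm_Jset[OF assms(1)]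
  by (intro optimal_n_means_iff_midpoints[OF Jset_left_less_right[OF assms(1)] assms(2), of "3^k"]) auto

lemma Verr_Pm_Jset_midpoints:
  assumes "k \<ge> 1" "n \<ge> 1"
  shows "Verr Pm (midpoints n (1 - 1 / 3 ^ (k - 1)) (1 - 2 / 3 ^ k)) (Jset k)
           = ennreal (1 / real n ^ 2 * (1 / 12) * (1 / 18 ^ k))"
proof -
  define a c :: real where "a = 1 - 1 / 3 ^ (k - 1)" and "c = 1 - 2 / 3 ^ k"
  have "c - a = 1 / 3 ^ k" "a < c"
    using Jset_length[OF assms(1)] Jset_left_less_right[OF assms(1)] unfolding a_def c_def by auto
  note M = interval_distortion_midpoints[OF assms(2) \<open>a < c\<close>]
  have "finite (midpoints n a c)" "midpoints n a c \<noteq> {}"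
    using M(1) assms(2) by (auto simp: finite_midpoints)
  from Verr_Pm_Jset[OF assms(1) this, folded a_def c_def]
  have "Verr Pm (midpoints n a c) (Jset k) = ennreal ((3/2)^k * ((1 / 3^k)^3 / (12 * (real n)^2)))"
    unfolding M(2) \<open>c - a = 1 / 3 ^ k\<close> .
  also have "(3/2)^k * ((1 / 3^k)^3 / (12 * (real n)^2)) = 1 / real n ^ 2 * (1 / 12) * (1 / 18 ^ k)"
  proof -
    have "(3/2::real)^k * (1 / 3^k)^3 = 1 / 18^k" by (induction k) (simp_all add: field_simps)
    then show ?thesis by (simp only: times_divide_eq_right) simp
  qed
  finally show ?thesis unfolding a_def c_def .
qed

lemma optimal_one_mean_cond_Pm_Jtail_iff:
  "optimal_n_means (cond_measure Pm (Jtail k)) 1 \<alpha> \<longleftrightarrow> \<alpha> = {1 - (1/3)^k / 2}"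
  by (rule optimal_one_mean_iff[of 1 "25/204 * (1/9)^k"]) (simp_all add: qerr_cond_Pm_Jtail_singleton)

theorem proposition3p5:
  fixes k n :: nat
  assumes "k \<ge> 1" and "n \<ge> 1"
  defines "A \<equiv> {1 - 1 / 3 ^ (k - 1) + (2 * real i - 1) / (2 * real n) * (1 / 3 ^ k) | i. 1 \<le> i \<and> i \<le> n}"
  shows "optimal_n_means (cond_measure Pm (Jset k)) n A
       \<and> (\<forall>\<beta>. optimal_n_means (cond_measure Pm (Jset k)) n \<beta> \<longrightarrow> \<beta> = A)
       \<and> Verr Pm A (Jset k) = ennreal (1 / real n ^ 2 * (1 / 12) * (1 / 18 ^ k))
       \<and> (\<forall>\<alpha>1. optimal_n_means (cond_measure Pm (Jtail k)) 1 \<alpha>1 \<longrightarrow>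
            Verr Pm \<alpha>1 (Jtail k) = ennreal (25 / 204 * (1 / 18 ^ k)))"
proof -
  have A: "A = midpoints n (1 - 1 / 3 ^ (k - 1)) (1 - 2 / 3 ^ k)"
    unfolding midpoints_def Jset_length[OF assms(1)] A_def ..
  show ?thesis
    unfolding A
    using optimal_n_means_cond_Pm_Jset_iff[OF assms(1,2)] Verr_Pm_Jset_midpoints[OF assms(1,2)]
      optimal_one_mean_cond_Pm_Jtail_iff
    by (simp add: Verr_Pm_Jtail_singleton power_one_over)
qed

end
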